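(* Let $p,q\ge 1$ be integers, $C$ a finite set, and $M\in\mathcal M(p,q,C)$. Let $\gamma\in C$ be a colour of frequency $l$ in $M$. Then: (1) $l\le\min(p,q)$; (2) $\operatorname{exc}(\gamma)\ge 0$; (3) if $l=\operatorname{frq}(M)$, then $|C|\le\lfloor pq/l\rfloor$.
   Context: $\mathcal M(p,q,C)$ is the set of $p\times q$ matrices $M$ with entries from $C$ such that each row of $M$ has $q$ pairwise distinct entries, each column has $p$ pairwise distinct entries, and every pair $\{\alpha,\beta\}$ of distinct colours of $C$ is good: there is a row or a column of $M$ containing both $\alpha$ and $\beta$. The frequency $\operatorname{frq}(\gamma)$ of $\gamma\in C$ is the number of entries of $M$ equal to $\gamma$, and $\operatorname{frq}(M)$ is the minimum frequency over all colours of $C$. The excess of a colour $\gamma$ of frequency $l$ is $\operatorname{exc}(\gamma)=l(p+q-l-1)-(|C|-1)$. *)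

theory Defs
  imports Main
begin

text \<open>A p x q matrix is a function M :: nat => nat => 'c, entry M i j for i < p, j < q.\<close>

definition row_set :: "(nat \<Rightarrow> nat \<Rightarrow> 'c) \<Rightarrow> nat \<Rightarrow> nat \<Rightarrow> 'c set" where
  "row_set M q i = (\<lambda>j. M i j) ` {..<q}"

definition col_set :: "(nat \<Rightarrow> nat \<Rightarrow> 'c) \<Rightarrow> nat \<Rightarrow> nat \<Rightarrow> 'c set" where
  "col_set M p j = (\<lambda>i. M i j) ` {..<p}"

definition good_pair :: "nat \<Rightarrow> nat \<Rightarrow> (nat \<Rightarrow> nat \<Rightarrow> 'c) \<Rightarrow> 'c \<Rightarrow> 'c \<Rightarrow> bool" where
  "good_pair p q M \<alpha> \<beta> \<longleftrightarrow>
     (\<exists>i<p. \<alpha> \<in> row_set M q i \<and> \<beta> \<in> row_set M q i) \<or>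
     (\<exists>j<q. \<alpha> \<in> col_set M p j \<and> \<beta> \<in> col_set M p j)"

definition in_M :: "nat \<Rightarrow> nat \<Rightarrow> 'c set \<Rightarrow> (nat \<Rightarrow> nat \<Rightarrow> 'c) \<Rightarrow> bool" where
  "in_M p q C M \<longleftrightarrow>
     (\<forall>i<p. \<forall>j<q. M i j \<in> C) \<and>
     (\<forall>i<p. inj_on (\<lambda>j. M i j) {..<q}) \<and>
     (\<forall>j<q. inj_on (\<lambda>i. M i j) {..<p}) \<and>
     (\<forall>\<alpha>\<in>C. \<forall>\<beta>\<in>C. \<alpha> \<noteq> \<beta> \<longrightarrow> good_pair p q M \<alpha> \<beta>)"

definition frq :: "nat \<Rightarrow> nat \<Rightarrow> (nat \<Rightarrow> nat \<Rightarrow> 'c) \<Rightarrow> 'c \<Rightarrow> nat" where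
  "frq p q M \<gamma> = card {(i, j). i < p \<and> j < q \<and> M i j = \<gamma>}"

definition frq_M :: "nat \<Rightarrow> nat \<Rightarrow> 'c set \<Rightarrow> (nat \<Rightarrow> nat \<Rightarrow> 'c) \<Rightarrow> nat" where
  "frq_M p q C M = Min (frq p q M ` C)"

definition exc :: "nat \<Rightarrow> nat \<Rightarrow> 'c set \<Rightarrow> (nat \<Rightarrow> nat \<Rightarrow> 'c) \<Rightarrow> 'c \<Rightarrow> int" where
  "exc p q C M \<gamma> = (let l = int (frq p q M \<gamma>) in
      l * (int p + int q - l - 1) - (int (card C) - 1))"

end

theory Submission
  imports Defs
begin

text \<open>The cells of colour \<gamma> lie in pairwise distinct rows and pairwise distinct columns, so they
  occupy exactly l rows and l columns. Any other colour shares a line with \<gamma>, hence occurs in one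
  of these l rows or l columns outside the cells of \<gamma>; there are
  l q + l p - l^2 - l = l (p + q - l - 1) such cells, which gives the excess bound.
  Finally the frequencies of all colours add up to p q and are at least frq(M) > 0.\<close>

definition colour_cells :: "nat \<Rightarrow> nat \<Rightarrow> (nat \<Rightarrow> nat \<Rightarrow> 'c) \<Rightarrow> 'c \<Rightarrow> (nat \<times> nat) set" where
  "colour_cells p q M \<gamma> = {(i, j). i < p \<and> j < q \<and> M i j = \<gamma>}"

definition colour_cross :: "nat \<Rightarrow> nat \<Rightarrow> (nat \<Rightarrow> nat \<Rightarrow> 'c) \<Rightarrow> 'c \<Rightarrow> (nat \<times> nat) set" where
  "colour_cross p q M \<gamma> =
     fst ` colour_cells p q M \<gamma> \<times> {..<q} \<union> {..<p} \<times> snd ` colour_cells p q M \<gamma>"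

lemma frq_eq_card_colour_cells: "frq p q M \<gamma> = card (colour_cells p q M \<gamma>)"
  by (simp add: frq_def colour_cells_def)

lemma colour_cells_subset: "colour_cells p q M \<gamma> \<subseteq> {..<p} \<times> {..<q}"
  by (auto simp: colour_cells_def)

lemma finite_colour_cells [simp]: "finite (colour_cells p q M \<gamma>)"
  by (rule finite_subset[OF colour_cells_subset]) simp

lemma fst_colour_cells_subset: "fst ` colour_cells p q M \<gamma> \<subseteq> {..<p}"
  using colour_cells_subset by fastforce

lemma snd_colour_cells_subset: "snd ` colour_cells p q M \<gamma> \<subseteq> {..<q}"
  using colour_cells_subset by fastforce

lemma card_colour_rows:
  assumes "\<forall>i<p. inj_on (\<lambda>j. M i j) {..<q}"
  shows "card (fst ` colour_cells p q M \<gamma>) = frq p q M \<gamma>"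
proof -
  have "inj_on fst (colour_cells p q M \<gamma>)"
    using assms by (auto simp: inj_on_def colour_cells_def)
  then show ?thesis by (simp add: card_image frq_eq_card_colour_cells)
qed

lemma card_colour_cols:
  assumes "\<forall>j<q. inj_on (\<lambda>i. M i j) {..<p}"
  shows "card (snd ` colour_cells p q M \<gamma>) = frq p q M \<gamma>"
proof -
  have "inj_on snd (colour_cells p q M \<gamma>)"
    using assms by (auto simp: inj_on_def colour_cells_def)
  then show ?thesis by (simp add: card_image frq_eq_card_colour_cells)
qed

lemma frq_le_rows:
  assumes "\<forall>i<p. inj_on (\<lambda>j. M i j) {..<q}"
  shows "frq p q M \<gamma> \<le> p"
  using card_mono[OF _ fst_colour_cells_subset[of p q M \<gamma>]] card_colour_rows[OF assms] by simp

lemma frq_le_cols: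
  assumes "\<forall>j<q. inj_on (\<lambda>i. M i j) {..<p}"
  shows "frq p q M \<gamma> \<le> q"
  using card_mono[OF _ snd_colour_cells_subset[of p q M \<gamma>]] card_colour_cols[OF assms] by simp

lemma card_rows_Un_cols:
  assumes "R \<subseteq> {..<p}" and "K \<subseteq> {..<q}"
  shows "card (R \<times> {..<q} \<union> {..<p} \<times> K) + card R * card K = card R * q + p * card K"
proof -
  have "finite R" "finite K"
    using assms by (auto intro: finite_subset)
  moreover have "R \<times> {..<q} \<inter> {..<p} \<times> K = R \<times> K"
    using assms by auto
  ultimately show ?thesis
    using card_Un_Int[of "R \<times> {..<q}" "{..<p} \<times> K"] by (simp add: card_cartesian_product)
qed

lemma colour_cells_subset_cross: "colour_cells p q M \<gamma> \<subseteq> colour_cross p q M \<gamma>"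
  by (force simp: colour_cross_def colour_cells_def)

lemma card_colour_cross_Diff_cells:
  fixes \<gamma> :: 'c
  assumes "in_M p q C M"
  defines "l \<equiv> frq p q M \<gamma>"
  shows "int (card (colour_cross p q M \<gamma> - colour_cells p q M \<gamma>)) =
         int l * (int p + int q - int l - 1)"
proof -
  have rows: "card (fst ` colour_cells p q M \<gamma>) = l"
    and cols: "card (snd ` colour_cells p q M \<gamma>) = l"
    using assms card_colour_rows card_colour_cols by (auto simp: in_M_def)
  from card_rows_Un_cols[OF fst_colour_cells_subset[of p q M \<gamma>] snd_colour_cells_subset[of p q M \<gamma>]]
  have cross: "card (colour_cross p q M \<gamma>) + l * l = l * q + p * l"
    unfolding colour_cross_def rows cols .
  have "finite (colour_cross p q M \<gamma>)"
    by (simp add: colour_cross_def)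
  then have "l \<le> card (colour_cross p q M \<gamma>)"
    using card_mono[OF _ colour_cells_subset_cross] by (simp add: l_def frq_eq_card_colour_cells)
  moreover have "card (colour_cross p q M \<gamma> - colour_cells p q M \<gamma>) = card (colour_cross p q M \<gamma>) - l"
    using card_Diff_subset[OF finite_colour_cells colour_cells_subset_cross]
    by (simp add: l_def frq_eq_card_colour_cells)
  ultimately have "int (card (colour_cross p q M \<gamma> - colour_cells p q M \<gamma>)) + int l * int l + int l
      = int l * int q + int p * int l"
    using cross by (simp add: of_nat_diff flip: of_nat_mult of_nat_add)
  moreover have "int l * (int p + int q - int l - 1) = int l * int q + int p * int l - int l * int l - int l"
    by (simp add: algebra_simps)
  ultimately show ?thesis
    by linarith
qed

lemma good_pair_in_colour_cross:
  assumes "good_pair p q M \<alpha> \<gamma>" and "\<alpha> \<noteq> \<gamma>"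
  shows "\<alpha> \<in> (\<lambda>(i, j). M i j) ` (colour_cross p q M \<gamma> - colour_cells p q M \<gamma>)"
  using assms(1) unfolding good_pair_def row_set_def col_set_def
proof (elim disjE exE conjE)
  fix i assume "i < p" "\<alpha> \<in> (\<lambda>j. M i j) ` {..<q}" "\<gamma> \<in> (\<lambda>j. M i j) ` {..<q}"
  then obtain j j\<^sub>0 where "j < q" "\<alpha> = M i j" "j\<^sub>0 < q" "\<gamma> = M i j\<^sub>0"
    by auto
  with \<open>i < p\<close> assms(2) have "(i, j) \<in> colour_cross p q M \<gamma> - colour_cells p q M \<gamma>"
    by (force simp: colour_cross_def colour_cells_def)
  with \<open>\<alpha> = M i j\<close> show ?thesis
    by force
next
  fix j assume "j < q" "\<alpha> \<in> (\<lambda>i. M i j) ` {..<p}" "\<gamma> \<in> (\<lambda>i. M i j) ` {..<p}"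
  then obtain i i\<^sub>0 where "i < p" "\<alpha> = M i j" "i\<^sub>0 < p" "\<gamma> = M i\<^sub>0 j"
    by auto
  with \<open>j < q\<close> assms(2) have "(i, j) \<in> colour_cross p q M \<gamma> - colour_cells p q M \<gamma>"
    by (force simp: colour_cross_def colour_cells_def)
  with \<open>\<alpha> = M i j\<close> show ?thesis
    by force
qed

lemma card_le_colour_cross_Diff_cells:
  assumes "in_M p q C M" and "\<gamma> \<in> C"
  shows "card C \<le> card (colour_cross p q M \<gamma> - colour_cells p q M \<gamma>) + 1"
proof -
  let ?S = "colour_cross p q M \<gamma> - colour_cells p q M \<gamma>"
  have "finite ?S"
    by (simp add: colour_cross_def)
  have "good_pair p q M \<alpha> \<gamma>" if "\<alpha> \<in> C" "\<alpha> \<noteq> \<gamma>" for \<alpha>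
    using assms that unfolding in_M_def by blast
  then have "C \<subseteq> insert \<gamma> ((\<lambda>(i, j). M i j) ` ?S)"
    using good_pair_in_colour_cross by (metis insertCI subsetI)
  then have "card C \<le> card (insert \<gamma> ((\<lambda>(i, j). M i j) ` ?S))"
    by (rule card_mono[rotated]) (simp add: \<open>finite ?S\<close>)
  also have "\<dots> \<le> card ((\<lambda>(i, j). M i j) ` ?S) + 1"
    by (simp add: card_insert_if \<open>finite ?S\<close>)
  also have "\<dots> \<le> card ?S + 1"
    using card_image_le[OF \<open>finite ?S\<close>] by simp
  finally show ?thesis .
qed

lemma exc_nonneg:
  assumes "in_M p q C M" and "\<gamma> \<in> C"
  shows "exc p q C M \<gamma> \<ge> 0"
proof -
  have "int (card C) \<le> int (card (colour_cross p q M \<gamma> - colour_cells p q M \<gamma>)) + 1"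
    using card_le_colour_cross_Diff_cells[OF assms] by linarith
  then show ?thesis
    unfolding exc_def Let_def card_colour_cross_Diff_cells[OF assms(1)] by linarith
qed

lemma frq_pos_iff: "0 < frq p q M \<gamma> \<longleftrightarrow> (\<exists>i<p. \<exists>j<q. M i j = \<gamma>)"
  by (simp add: frq_eq_card_colour_cells card_gt_0_iff) (auto simp: colour_cells_def)

lemma frq_pos:
  assumes "in_M p q C M" and "0 < p" and "0 < q" and "\<gamma> \<in> C"
  shows "0 < frq p q M \<gamma>"
proof (cases "M 0 0 = \<gamma>")
  case True
  with assms(2,3) show ?thesis
    by (auto simp: frq_pos_iff)
next
  case False
  with assms have "good_pair p q M (M 0 0) \<gamma>"
    unfolding in_M_def by blast
  then show ?thesis
    unfolding frq_pos_iff good_pair_def row_set_def col_set_def by blast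
qed

lemma sum_frq_eq:
  assumes "\<forall>i<p. \<forall>j<q. M i j \<in> C" and "finite C"
  shows "(\<Sum>\<gamma>\<in>C. frq p q M \<gamma>) = p * q"
proof -
  have "(\<Union>\<gamma>\<in>C. colour_cells p q M \<gamma>) = {..<p} \<times> {..<q}"
    using assms(1) by (auto simp: colour_cells_def)
  moreover have "card (\<Union>\<gamma>\<in>C. colour_cells p q M \<gamma>) = (\<Sum>\<gamma>\<in>C. card (colour_cells p q M \<gamma>))"
    using assms(2) by (rule card_UN_disjoint) (simp, auto simp: colour_cells_def)
  ultimately show ?thesis
    by (simp add: frq_eq_card_colour_cells)
qed

lemma card_mult_frq_M_le:
  assumes "in_M p q C M" and "finite C"
  shows "card C * frq_M p q C M \<le> p * q"
proof -
  have "card C * frq_M p q C M = (\<Sum>\<gamma>\<in>C. frq_M p q C M)"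
    by simp
  also have "\<dots> \<le> (\<Sum>\<gamma>\<in>C. frq p q M \<gamma>)"
    using assms(2) by (intro sum_mono) (simp add: frq_M_def)
  also have "\<dots> = p * q"
    using assms by (intro sum_frq_eq) (auto simp: in_M_def)
  finally show ?thesis .
qed

theorem lemma1:
  fixes p q :: nat and C :: "'c set" and M :: "nat \<Rightarrow> nat \<Rightarrow> 'c" and \<gamma> :: 'c and l :: nat
  assumes "p \<ge> 1" and "q \<ge> 1" and "finite C" and "in_M p q C M"
    and "\<gamma> \<in> C" and "l = frq p q M \<gamma>"
  shows "l \<le> min p q \<and> exc p q C M \<gamma> \<ge> 0 \<and>
         (l = frq_M p q C M \<longrightarrow> card C \<le> (p * q) div l)"
proof (intro conjI impI)
  have rows: "\<forall>i<p. inj_on (\<lambda>j. M i j) {..<q}" and cols: "\<forall>j<q. inj_on (\<lambda>i. M i j) {..<p}"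
    using assms(4) by (simp_all add: in_M_def)
  show "l \<le> min p q"
    using assms(6) frq_le_rows[OF rows] frq_le_cols[OF cols] by simp
  show "exc p q C M \<gamma> \<ge> 0"
    using assms(4,5) by (rule exc_nonneg)
  assume "l = frq_M p q C M"
  then have "card C * l \<le> p * q"
    using assms(3,4) by (simp add: card_mult_frq_M_le)
  moreover have "0 < l"
    using frq_pos[OF assms(4) _ _ assms(5)] assms(1,2,6) by simp
  ultimately show "card C \<le> (p * q) div l"
    by (simp add: less_eq_div_iff_mult_less_eq)
qed

end
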